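(* Let $r \ge 3$. There exist constants $\alpha>0$, $c>0$ and $t_0$, depending only on $r$, such that for every integer $t \ge t_0$ and every integer $m$ with $\binom{t-1}{r} \le m \le \binom{t}{r}$, \[ \Lambda(m,r) - \Lambda(\lfloor m - \alpha t^{r-1}\rfloor, r) \ge c\, t^{-2}. \]
   Context: An $r$-graph is a finite subset $G$ of $\mathbb{N}^{(r)}$ (the $r$-subsets of $\mathbb{N}$). A weighting of $\mathbb{N}$ is $w:\mathbb{N}\to[0,\infty)$ with $\sum_x w(x)=1$; $w(G)=\sum_{e\in G}\prod_{x\in e}w(x)$; the Lagrangian is $\lambda(G)=\max_w w(G)$. $\Lambda(m,r)=\max\{\lambda(G): G\subseteq\mathbb{N}^{(r)},\ |G|=m\}$. *)

theory Defs
  imports Complex_Main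
begin

definition rgraph :: "nat \<Rightarrow> nat set set \<Rightarrow> bool" where
  "rgraph r G \<longleftrightarrow> finite G \<and> (\<forall>e\<in>G. finite e \<and> card e = r)"

definition weighting :: "(nat \<Rightarrow> real) \<Rightarrow> bool" where
  "weighting w \<longleftrightarrow> (\<forall>x. 0 \<le> w x) \<and> w sums 1"

definition wgraph :: "(nat \<Rightarrow> real) \<Rightarrow> nat set set \<Rightarrow> real" where
  "wgraph w G = (\<Sum>e\<in>G. \<Prod>x\<in>e. w x)"

text \<open>Lagrangian (the maximum is attained, so it equals the supremum).\<close>
definition lagrangian :: "nat set set \<Rightarrow> real" where
  "lagrangian G = (SUP w\<in>{w. weighting w}. wgraph w G)"

definition Lam :: "nat \<Rightarrow> nat \<Rightarrow> real" where
  "Lam m r = (SUP G\<in>{G. rgraph r G \<and> card G = m}. lagrangian G)"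

end

(*
  Lower bound: if (t - 1 choose r) <= m, an r-graph with m edges may contain the complete
  r-graph on t - 1 vertices, whose uniform weighting has value at least (1 - C(r,2)/(t - 1)) / r!.

  Upper bound: with E = C(r,2) + 3 + r^5 and alpha = r E, Bernoulli's inequality shows that an
  r-graph G with at most m - alpha t^(r-1) edges satisfies r! |G| <= (t - E)^r.
  Take a near-optimal weighting w.  If some vertex v has weight above eta = r/t, then all partial
  derivatives of w(G) at vertices of non-negligible weight are almost equal (otherwise shifting
  weight would increase w(G)), and Euler's identity bounds r w(G) by the derivative at v, which is
  at most e_(r-1) of the remaining weights <= (1 - eta)^(r-1) / (r-1)!.  If all weights are at most
  eta, put q = sum of the squared weights: Cauchy-Schwarz gives (r! w(G))^2 <= (t - E)^r q^r, and
  expanding the elementary symmetric polynomial gives r! w(G) <= 1 - C(r,2) q + r^4 eta q.  The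
  first bound wins for small q, the second for large q, and in each of the three cases
  r! w(G) <= 1 - C(r,2)/t - (2 C(r,2) + 1)/t^2, which is 1/t^2 below the lower bound.
*)
theory Submission
  imports Defs "HOL-Analysis.Convex" "HOL-Analysis.Infinite_Products"
begin

section \<open>Elementary symmetric polynomials of weightings\<close>

definition complete_rgraph :: "nat set \<Rightarrow> nat \<Rightarrow> nat set set" where
  "complete_rgraph V k = {A. A \<subseteq> V \<and> card A = k}"

definition esym :: "nat \<Rightarrow> nat set \<Rightarrow> (nat \<Rightarrow> real) \<Rightarrow> real" where
  "esym k V w = wgraph w (complete_rgraph V k)"

text \<open>The partial derivative of the polynomial \<open>w(G)\<close> in the variable \<open>w u\<close>, that is, the weight of
  the link of \<open>u\<close>.\<close>
definition wgraph_deriv :: "nat set set \<Rightarrow> (nat \<Rightarrow> real) \<Rightarrow> nat \<Rightarrow> real" where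
  "wgraph_deriv G w u = (\<Sum>e\<in>{e\<in>G. u \<in> e}. \<Prod>x\<in>e - {u}. w x)"

lemma finite_complete_rgraph: "finite V \<Longrightarrow> finite (complete_rgraph V k)"
  unfolding complete_rgraph_def by (rule finite_subset[of _ "Pow V"]) auto

lemma finite_complete_rgraph_edge: "finite V \<Longrightarrow> e \<in> complete_rgraph V k \<Longrightarrow> finite e"
  unfolding complete_rgraph_def using finite_subset by auto

lemma card_complete_rgraph: "finite V \<Longrightarrow> card (complete_rgraph V k) = card V choose k"
  unfolding complete_rgraph_def by (rule n_subsets)

lemma rgraph_complete_rgraph: "finite V \<Longrightarrow> rgraph k (complete_rgraph V k)"
  unfolding rgraph_def complete_rgraph_def
  using finite_complete_rgraph[of V k] finite_subset by (auto simp: complete_rgraph_def)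

lemma rgraph_subset_complete_rgraph:
  assumes "rgraph r G"
  shows "finite (\<Union>G)" "G \<subseteq> complete_rgraph (\<Union>G) r"
  using assms unfolding rgraph_def complete_rgraph_def by auto

lemma complete_rgraph_mono: "V \<subseteq> V' \<Longrightarrow> complete_rgraph V k \<subseteq> complete_rgraph V' k"
  unfolding complete_rgraph_def by auto

lemma wgraph_nonneg: "(\<And>x. 0 \<le> w x) \<Longrightarrow> 0 \<le> wgraph w G"
  unfolding wgraph_def by (intro sum_nonneg prod_nonneg) auto

lemma wgraph_mono:
  assumes "G \<subseteq> G'" "finite G'" "\<And>x. 0 \<le> w x"
  shows "wgraph w G \<le> wgraph w G'"
  unfolding wgraph_def by (rule sum_mono2) (use assms in \<open>auto intro: prod_nonneg\<close>)

lemma wgraph_deriv_mono: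
  assumes "G \<subseteq> G'" "finite G'" "\<And>x. 0 \<le> w x"
  shows "wgraph_deriv G w u \<le> wgraph_deriv G' w u"
  unfolding wgraph_deriv_def by (rule sum_mono2) (use assms in \<open>auto intro: prod_nonneg\<close>)

lemma wgraph_deriv_eq_sum:
  assumes "finite G"
  shows "wgraph_deriv G w u = (\<Sum>e\<in>G. if u \<in> e then \<Prod>x\<in>e - {u}. w x else 0)"
  unfolding wgraph_deriv_def using assms by (simp add: sum.inter_filter)

lemma euler_wgraph_deriv:
  assumes V: "finite V" and G: "G \<subseteq> complete_rgraph V k"
  shows "(\<Sum>u\<in>V. w u * wgraph_deriv G w u) = real k * wgraph w G"
proof -
  have fG: "finite G" using finite_subset[OF G finite_complete_rgraph[OF V]] .
  have edge: "e \<subseteq> V" "card e = k" "finite e" if "e \<in> G" for e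
    using that G unfolding complete_rgraph_def by (auto intro: rev_finite_subset[OF V])
  have "(\<Sum>u\<in>V. w u * wgraph_deriv G w u) = (\<Sum>u\<in>V. \<Sum>e\<in>G. if u \<in> e then \<Prod>x\<in>e. w x else 0)"
    unfolding wgraph_deriv_eq_sum[OF fG] sum_distrib_left
    by (intro sum.cong refl) (use edge in \<open>auto simp: prod.remove\<close>)
  also have "\<dots> = (\<Sum>e\<in>G. \<Sum>u\<in>V. if u \<in> e then \<Prod>x\<in>e. w x else 0)"
    by (rule sum.swap)
  also have "\<dots> = (\<Sum>e\<in>G. real k * (\<Prod>x\<in>e. w x))"
  proof (intro sum.cong refl)
    fix e assume "e \<in> G"
    then have "V \<inter> {u. u \<in> e} = e" using edge by auto
    then show "(\<Sum>u\<in>V. if u \<in> e then \<Prod>x\<in>e. w x else 0) = real k * (\<Prod>x\<in>e. w x)"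
      using edge \<open>e \<in> G\<close> by (simp add: sum.inter_restrict[OF V, symmetric])
  qed
  finally show ?thesis by (simp add: wgraph_def sum_distrib_left)
qed

lemma wgraph_deriv_complete_rgraph:
  assumes V: "finite V" and u: "u \<in> V" and k: "k \<ge> 1"
  shows "wgraph_deriv (complete_rgraph V k) w u = esym (k - 1) (V - {u}) w"
  unfolding wgraph_deriv_def esym_def wgraph_def
proof (rule sum.reindex_bij_witness[where i="insert u" and j="\<lambda>e. e - {u}"])
  fix a assume "a \<in> complete_rgraph (V - {u}) (k - 1)"
  then have a: "a \<subseteq> V - {u}" "card a = k - 1" "finite a"
    using V finite_subset unfolding complete_rgraph_def by auto
  then show "insert u a - {u} = a" "insert u a \<in> {e \<in> complete_rgraph V k. u \<in> e}"
    using u k unfolding complete_rgraph_def by (auto simp: card_insert_if)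
next
  fix a assume "a \<in> {e \<in> complete_rgraph V k. u \<in> e}"
  then have a: "a \<subseteq> V" "card a = k" "u \<in> a" "finite a"
    using V finite_subset unfolding complete_rgraph_def by auto
  then show "insert u (a - {u}) = a" "a - {u} \<in> complete_rgraph (V - {u}) (k - 1)"
    unfolding complete_rgraph_def by auto
qed simp

lemma esym_remove:
  assumes V: "finite V" and u: "u \<in> V" and k: "k \<ge> 1"
  shows "esym k V w = esym k (V - {u}) w + w u * esym (k - 1) (V - {u}) w"
proof -
  let ?K = "complete_rgraph V k"
  have "esym k V w = (\<Sum>e\<in>{e\<in>?K. u \<notin> e}. \<Prod>x\<in>e. w x) + (\<Sum>e\<in>{e\<in>?K. u \<in> e}. \<Prod>x\<in>e. w x)"
    unfolding esym_def wgraph_def using finite_complete_rgraph[OF V]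
    by (subst sum.union_disjoint[symmetric]) (auto intro: sum.cong)
  moreover have "{e\<in>?K. u \<notin> e} = complete_rgraph (V - {u}) k"
    unfolding complete_rgraph_def by auto
  moreover have "(\<Sum>e\<in>{e\<in>?K. u \<in> e}. \<Prod>x\<in>e. w x) = w u * wgraph_deriv ?K w u"
    unfolding wgraph_deriv_def sum_distrib_left
    by (intro sum.cong refl) (auto simp: prod.remove dest: finite_complete_rgraph_edge[OF V])
  ultimately show ?thesis
    using wgraph_deriv_complete_rgraph[OF V u k] by (simp add: esym_def wgraph_def)
qed

lemma esym_nonneg: "(\<And>x. 0 \<le> w x) \<Longrightarrow> 0 \<le> esym k V w"
  unfolding esym_def by (rule wgraph_nonneg)

lemma esym_mono:
  assumes "V \<subseteq> V'" "finite V'" "\<And>x. 0 \<le> w x"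
  shows "esym k V w \<le> esym k V' w"
  unfolding esym_def
  using assms by (intro wgraph_mono complete_rgraph_mono finite_complete_rgraph)

lemma esym_0: "finite V \<Longrightarrow> esym 0 V w = 1"
proof -
  assume "finite V"
  then have "complete_rgraph V 0 = {{}}"
    unfolding complete_rgraph_def using finite_subset by fastforce
  then show ?thesis by (simp add: esym_def wgraph_def)
qed

lemma euler_esym:
  assumes "finite V" "k \<ge> 1"
  shows "real k * esym k V w = (\<Sum>u\<in>V. w u * esym (k - 1) (V - {u}) w)"
proof -
  have "real k * esym k V w = (\<Sum>u\<in>V. w u * wgraph_deriv (complete_rgraph V k) w u)"
    by (simp add: esym_def euler_wgraph_deriv[OF assms(1) order_refl])
  also have "\<dots> = (\<Sum>u\<in>V. w u * esym (k - 1) (V - {u}) w)"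
    by (intro sum.cong refl) (simp add: wgraph_deriv_complete_rgraph[OF assms(1) _ assms(2)])
  finally show ?thesis .
qed

lemma esym_1: "finite V \<Longrightarrow> esym 1 V w = (\<Sum>u\<in>V. w u)"
  using euler_esym[of V 1 w] esym_0 by simp

lemma fact_esym_le_power_sum:
  assumes V: "finite V" and w: "\<And>x. 0 \<le> w x"
  shows "fact k * esym k V w \<le> (\<Sum>u\<in>V. w u) ^ k"
proof (induction k)
  case 0
  then show ?case using esym_0[OF V] by simp
next
  case (Suc k)
  let ?s = "\<Sum>u\<in>V. w u"
  have "real (Suc k) * esym (Suc k) V w = (\<Sum>u\<in>V. w u * esym k (V - {u}) w)"
    using euler_esym[OF V, of "Suc k" w] by simp
  also have "\<dots> \<le> (\<Sum>u\<in>V. w u * esym k V w)"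
    by (intro sum_mono mult_left_mono esym_mono) (use V w in auto)
  finally have "real (Suc k) * esym (Suc k) V w \<le> ?s * esym k V w"
    by (simp add: sum_distrib_right)
  then have "fact (Suc k) * esym (Suc k) V w \<le> ?s * (fact k * esym k V w)"
    using mult_left_mono[of _ _ "fact k :: real"] by (fastforce simp: algebra_simps)
  also have "\<dots> \<le> ?s * ?s ^ k"
    by (rule mult_left_mono[OF Suc.IH]) (simp add: sum_nonneg w)
  finally show ?case by simp
qed

lemma esym_add_2_recurrence:
  assumes V: "finite V"
  shows "real (k + 2) * esym (k + 2) V w
           = (\<Sum>u\<in>V. w u) * esym (k + 1) V w - (\<Sum>u\<in>V. (w u)\<^sup>2 * esym k (V - {u}) w)"
proof -
  have "real (k + 2) * esym (k + 2) V w = (\<Sum>u\<in>V. w u * esym (k + 1) (V - {u}) w)"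
    using euler_esym[OF V, of "k + 2" w] by simp
  also have "\<dots> = (\<Sum>u\<in>V. w u * esym (k + 1) V w - (w u)\<^sup>2 * esym k (V - {u}) w)"
    using esym_remove[OF V _, of _ "k + 1" w] by (intro sum.cong refl) (simp add: algebra_simps power2_eq_square)
  finally show ?thesis by (simp add: sum_subtractf sum_distrib_right)
qed

lemma fact_esym_add_2_ge:
  assumes V: "finite V" and w: "\<And>x. 0 \<le> w x" and s: "(\<Sum>u\<in>V. w u) = 1"
  shows "fact (k + 2) * esym (k + 2) V w
           \<ge> fact (k + 1) * esym (k + 1) V w - real (k + 1) * (\<Sum>u\<in>V. (w u)\<^sup>2) * (fact k * esym k V w)"
proof -
  define q where "q = (\<Sum>u\<in>V. (w u)\<^sup>2)"
  have "(\<Sum>u\<in>V. (w u)\<^sup>2 * esym k (V - {u}) w) \<le> (\<Sum>u\<in>V. (w u)\<^sup>2 * esym k V w)"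
    by (intro sum_mono mult_left_mono esym_mono) (use V w in auto)
  then have "real (k + 2) * esym (k + 2) V w \<ge> esym (k + 1) V w - q * esym k V w"
    using esym_add_2_recurrence[OF V, of k w] s unfolding q_def by (simp add: sum_distrib_right)
  then have "fact (k + 1) * (real (k + 2) * esym (k + 2) V w) \<ge> fact (k + 1) * (esym (k + 1) V w - q * esym k V w)"
    by (rule mult_left_mono) simp
  then show ?thesis unfolding q_def by (simp add: algebra_simps)
qed

lemma fact_esym_ge:
  assumes V: "finite V" and w: "\<And>x. 0 \<le> w x" and s: "(\<Sum>u\<in>V. w u) = 1"
  shows "fact k * esym k V w \<ge> 1 - real k * (real k - 1) / 2 * (\<Sum>u\<in>V. (w u)\<^sup>2)"
proof (induction k)
  case 0
  then show ?case using esym_0[OF V] by simp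
next
  case (Suc k)
  define q where "q = (\<Sum>u\<in>V. (w u)\<^sup>2)"
  show ?case
  proof (cases k)
    case 0
    then show ?thesis using esym_1[OF V] s by simp
  next
    case (Suc j)
    have "fact j * esym j V w \<le> 1"
      using fact_esym_le_power_sum[of V w j] V w s by simp
    then have "real (j + 1) * q * (fact j * esym j V w) \<le> real (j + 1) * q"
      by (intro mult_left_le) (auto simp: q_def sum_nonneg)
    then have "fact (j + 2) * esym (j + 2) V w \<ge> fact (j + 1) * esym (j + 1) V w - real (j + 1) * q"
      using fact_esym_add_2_ge[OF V w s, of j] unfolding q_def by linarith
    moreover have "fact (j + 1) * esym (j + 1) V w \<ge> 1 - real (j + 1) * (real (j + 1) - 1) / 2 * q"
      using Suc.IH \<open>k = Suc j\<close> unfolding q_def by simp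
    moreover have "real (j + 1) * (real (j + 1) - 1) / 2 * q + real (j + 1) * q
                     = real (j + 2) * (real (j + 2) - 1) / 2 * q"
      by (simp add: field_simps)
    moreover have "Suc k = j + 2" using \<open>k = Suc j\<close> by simp
    ultimately show ?thesis unfolding q_def by simp
  qed
qed

lemma fact_esym_add_3_le:
  assumes V: "finite V" and w: "\<And>x. 0 \<le> w x" and s: "(\<Sum>u\<in>V. w u) = 1"
    and \<eta>: "\<And>x. x \<in> V \<Longrightarrow> w x \<le> \<eta>"
  defines "q \<equiv> \<Sum>u\<in>V. (w u)\<^sup>2"
  shows "fact (k + 3) * esym (k + 3) V w \<le> fact (k + 2) * esym (k + 2) V w
           - real (k + 2) * q * (fact (k + 1) * esym (k + 1) V w)
           + real (k + 2) * real (k + 1) * \<eta> * q * (fact k * esym k V w)"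
proof -
  have "esym (k + 1) (V - {u}) w \<ge> esym (k + 1) V w - \<eta> * esym k V w" if u: "u \<in> V" for u
  proof -
    have "w u * esym k (V - {u}) w \<le> \<eta> * esym k V w"
      by (intro mult_mono esym_mono) (use u \<eta> V w esym_nonneg[of w] in \<open>auto intro: order_trans[OF w]\<close>)
    then show ?thesis using esym_remove[OF V u, of "k + 1" w] by simp
  qed
  then have "(\<Sum>u\<in>V. (w u)\<^sup>2 * (esym (k + 1) V w - \<eta> * esym k V w))
               \<le> (\<Sum>u\<in>V. (w u)\<^sup>2 * esym (k + 1) (V - {u}) w)"
    by (intro sum_mono mult_left_mono) auto
  moreover have "(\<Sum>u\<in>V. (w u)\<^sup>2 * (esym (k + 1) V w - \<eta> * esym k V w))
                   = q * esym (k + 1) V w - \<eta> * q * esym k V w"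
    unfolding q_def right_diff_distrib sum_subtractf by (simp add: sum_distrib_left sum_distrib_right mult_ac)
  ultimately have "real (k + 3) * esym (k + 3) V w \<le> esym (k + 2) V w - q * esym (k + 1) V w + \<eta> * q * esym k V w"
    using esym_add_2_recurrence[OF V, of "k + 1" w] s by (simp add: eval_nat_numeral)
  then have "fact (k + 2) * (real (k + 3) * esym (k + 3) V w)
               \<le> fact (k + 2) * (esym (k + 2) V w - q * esym (k + 1) V w + \<eta> * q * esym k V w)"
    by (rule mult_left_mono) simp
  moreover have "fact (k + 3) = real (k + 3) * (fact (k + 2) :: real)"
    "fact (k + 2) = real (k + 2) * (fact (k + 1) :: real)" "fact (k + 1) = real (k + 1) * (fact k :: real)"
    by (simp_all add: eval_nat_numeral)
  ultimately show ?thesis by (simp add: algebra_simps)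
qed

lemma sum_squares_le_max:
  fixes w :: "nat \<Rightarrow> real"
  assumes w: "\<And>x. 0 \<le> w x" and s: "(\<Sum>u\<in>V. w u) = 1" and \<eta>: "\<And>x. x \<in> V \<Longrightarrow> w x \<le> \<eta>"
  shows "(\<Sum>u\<in>V. (w u)\<^sup>2) \<le> \<eta>"
proof -
  have "(\<Sum>u\<in>V. (w u)\<^sup>2) \<le> (\<Sum>u\<in>V. \<eta> * w u)"
    unfolding power2_eq_square by (intro sum_mono mult_right_mono) (use \<eta> w in auto)
  then show ?thesis using s by (simp add: sum_distrib_left[symmetric])
qed

lemma fact_esym_add_2_le:
  assumes V: "finite V" and w: "\<And>x. 0 \<le> w x" and s: "(\<Sum>u\<in>V. w u) = 1"
    and \<eta>: "\<And>x. x \<in> V \<Longrightarrow> w x \<le> \<eta>"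
  defines "q \<equiv> \<Sum>u\<in>V. (w u)\<^sup>2"
  shows "fact (j + 2) * esym (j + 2) V w
           \<le> 1 - real (j + 2) * (real (j + 2) - 1) / 2 * q + real (j + 2) ^ 4 * \<eta> * q"
proof (induction j)
  case 0
  have "fact 2 * esym 2 V w = 1 - q"
    using esym_add_2_recurrence[OF V, of 0 w] s esym_0[of "V - {_}"] esym_1[OF V, of w] V
    unfolding q_def by (simp add: numeral_2_eq_2)
  moreover have "0 \<le> q" "q \<le> \<eta>"
    using sum_squares_le_max[OF w s \<eta>] unfolding q_def by (simp_all add: sum_nonneg)
  ultimately show ?case by (simp add: numeral_2_eq_2)
next
  case (Suc j)
  define C :: "nat \<Rightarrow> real" where "C n = real n * (real n - 1) / 2" for n
  have q: "0 \<le> q" "q \<le> \<eta>" using sum_squares_le_max[OF w s \<eta>] unfolding q_def by (simp_all add: sum_nonneg)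
  have "fact j * esym j V w \<le> 1"
    using fact_esym_le_power_sum[of V w j] V w s by simp
  then have c: "real (j + 2) * real (j + 1) * \<eta> * q * (fact j * esym j V w) \<le> real (j + 2) * real (j + 1) * \<eta> * q"
    using q by (intro mult_left_le) auto
  have "fact (j + 1) * esym (j + 1) V w \<ge> 1 - C (j + 1) * q"
    using fact_esym_ge[OF V w s, of "j + 1"] unfolding C_def q_def by simp
  then have b: "real (j + 2) * q * (fact (j + 1) * esym (j + 1) V w) \<ge> real (j + 2) * q * (1 - C (j + 1) * q)"
    using q by (intro mult_left_mono) auto
  have "real (j + 2) * C (j + 1) * (q * q) \<le> real (j + 2) * C (j + 1) * (\<eta> * q)"
    using q by (intro mult_left_mono mult_right_mono) (auto simp: C_def)
  moreover have "C (j + 2) * q + real (j + 2) * q = C (j + 3) * q"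
    by (simp add: C_def field_simps)
  moreover have "(real (j + 2) ^ 4 + real (j + 2) * C (j + 1) + real (j + 2) * real (j + 1)) * (\<eta> * q)
                   \<le> real (j + 3) ^ 4 * (\<eta> * q)"
    using q by (intro mult_right_mono) (auto simp: C_def algebra_simps power4_eq_xxxx)
  moreover have "fact (j + 2) * esym (j + 2) V w \<le> 1 - C (j + 2) * q + real (j + 2) ^ 4 * \<eta> * q"
    using Suc.IH unfolding C_def .
  ultimately have "fact (j + 3) * esym (j + 3) V w \<le> 1 - C (j + 3) * q + real (j + 3) ^ 4 * \<eta> * q"
    using fact_esym_add_3_le[OF V w s \<eta>, of j] b c unfolding q_def
    by (simp add: algebra_simps)
  then show ?case by (simp add: C_def eval_nat_numeral)
qed

lemma fact_esym_le:
  assumes V: "finite V" and w: "\<And>x. 0 \<le> w x" and s: "(\<Sum>u\<in>V. w u) = 1"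
    and \<eta>: "\<And>x. x \<in> V \<Longrightarrow> w x \<le> \<eta>"
  shows "fact k * esym k V w
           \<le> 1 - real k * (real k - 1) / 2 * (\<Sum>u\<in>V. (w u)\<^sup>2) + (real k)^4 * \<eta> * (\<Sum>u\<in>V. (w u)\<^sup>2)"
proof (cases "k < 2")
  case True
  have "0 \<le> (\<Sum>u\<in>V. (w u)\<^sup>2)" "(\<Sum>u\<in>V. (w u)\<^sup>2) \<le> \<eta>"
    using sum_squares_le_max[OF w s \<eta>] by (simp_all add: sum_nonneg)
  then show ?thesis using True esym_0[OF V] esym_1[OF V] s by (auto simp: less_2_cases_iff)
next
  case False
  then obtain j where "k = j + 2" by (metis le_add_diff_inverse2 not_less)
  then show ?thesis using fact_esym_add_2_le[OF V w s \<eta>, of j] by simp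
qed

section \<open>Weightings and the Lagrangian\<close>

definition weighting_on :: "nat set \<Rightarrow> (nat \<Rightarrow> real) \<Rightarrow> bool" where
  "weighting_on V w \<longleftrightarrow> (\<forall>x. 0 \<le> w x) \<and> (\<forall>x. x \<notin> V \<longrightarrow> w x = 0) \<and> (\<Sum>x\<in>V. w x) = 1"

lemma weighting_on_imp_weighting: "finite V \<Longrightarrow> weighting_on V w \<Longrightarrow> weighting w"
  unfolding weighting_on_def weighting_def using sums_finite[of V w] by auto

lemma weighting_sum_le_1:
  assumes "weighting w" "finite I"
  shows "(\<Sum>x\<in>I. w x) \<le> 1"
proof -
  have "summable w" "suminf w = 1" using assms(1) unfolding weighting_def by (auto simp: sums_iff)
  then show ?thesis using sum_le_suminf[of w I] assms unfolding weighting_def by auto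
qed

lemma weighting_le_1: "weighting w \<Longrightarrow> w x \<le> 1"
  using weighting_sum_le_1[of w "{x}"] by simp

lemma weighting_on_le_1: "finite V \<Longrightarrow> weighting_on V w \<Longrightarrow> w x \<le> 1"
  using weighting_le_1 weighting_on_imp_weighting by blast

lemma ex_weighting_on_ge:
  assumes V: "finite V" "V \<noteq> {}" and w0: "weighting w0"
  obtains w where "weighting_on V w" "\<And>x. x \<in> V \<Longrightarrow> w0 x \<le> w x"
proof -
  obtain x0 where x0: "x0 \<in> V" using V(2) by blast
  define s where "s = (\<Sum>x\<in>V. w0 x)"
  have w0_nonneg: "0 \<le> w0 x" for x using w0 unfolding weighting_def by blast
  have "s \<le> 1" unfolding s_def using weighting_sum_le_1[OF w0 V(1)] .
  define w where "w x = (if x \<in> V then w0 x else 0) + (if x = x0 then 1 - s else 0)" for x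
  have "(\<Sum>x\<in>V. w x) = 1"
    unfolding w_def sum.distrib using V(1) x0 by (simp add: s_def)
  then have "weighting_on V w"
    unfolding weighting_on_def w_def using \<open>s \<le> 1\<close> x0 w0_nonneg by auto
  moreover have "w0 x \<le> w x" if "x \<in> V" for x
    unfolding w_def using that \<open>s \<le> 1\<close> by simp
  ultimately show ?thesis using that by blast
qed

lemma wgraph_mono_weights:
  assumes "\<And>x. x \<in> \<Union>G \<Longrightarrow> 0 \<le> w x \<and> w x \<le> w' x"
  shows "wgraph w G \<le> wgraph w' G"
  unfolding wgraph_def using assms by (intro sum_mono prod_mono) auto

lemma wgraph_le_1:
  assumes "rgraph r G" "weighting w"
  shows "wgraph w G \<le> 1"
proof -
  let ?V = "\<Union>G"
  note V = rgraph_subset_complete_rgraph[OF assms(1)]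
  have w: "0 \<le> w x" for x using assms(2) unfolding weighting_def by auto
  have "wgraph w G \<le> esym r ?V w"
    unfolding esym_def by (rule wgraph_mono[OF V(2) finite_complete_rgraph[OF V(1)] w])
  also have "\<dots> \<le> fact r * esym r ?V w"
    using esym_nonneg[of w r ?V, OF w] by (simp add: mult_le_cancel_right1)
  also have "\<dots> \<le> (\<Sum>x\<in>?V. w x) ^ r" by (rule fact_esym_le_power_sum[OF V(1) w])
  also have "\<dots> \<le> 1"
    using weighting_sum_le_1[OF assms(2) V(1)] by (simp add: sum_nonneg w power_le_one)
  finally show ?thesis .
qed

lemma bdd_above_wgraph: "rgraph r G \<Longrightarrow> bdd_above ((\<lambda>w. wgraph w G) ` {w. weighting w})"
  using wgraph_le_1 by (intro bdd_aboveI[of _ 1]) blast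

lemma weighting_point_mass: "weighting (\<lambda>x. if x = 0 then 1 else 0)"
  by (rule weighting_on_imp_weighting[of "{0}"]) (auto simp: weighting_on_def)

lemma wgraph_le_lagrangian: "rgraph r G \<Longrightarrow> weighting w \<Longrightarrow> wgraph w G \<le> lagrangian G"
  unfolding lagrangian_def by (rule cSUP_upper) (auto intro: bdd_above_wgraph)

lemma lagrangian_le_1: "rgraph r G \<Longrightarrow> lagrangian G \<le> 1"
  unfolding lagrangian_def by (rule cSUP_least) (use weighting_point_mass wgraph_le_1 in auto)

lemma lagrangian_le:
  assumes "\<And>w. weighting w \<Longrightarrow> wgraph w G \<le> T"
  shows "lagrangian G \<le> T"
  unfolding lagrangian_def by (rule cSUP_least) (use weighting_point_mass assms in auto)

lemma lagrangian_approx_by_weighting_on: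
  assumes G: "rgraph r G" "\<Union>G \<noteq> {}" and \<delta>: "\<delta> > 0"
  obtains w where "weighting_on (\<Union>G) w" "lagrangian G - \<delta> < wgraph w G"
proof -
  obtain w0 where w0: "weighting w0" "lagrangian G - \<delta> < wgraph w0 G"
    using less_cSUP_iff[OF _ bdd_above_wgraph[OF G(1)], of "lagrangian G - \<delta>"] weighting_point_mass \<delta>
    unfolding lagrangian_def by auto
  obtain w where w: "weighting_on (\<Union>G) w" "\<And>x. x \<in> \<Union>G \<Longrightarrow> w0 x \<le> w x"
    using ex_weighting_on_ge[OF rgraph_subset_complete_rgraph(1)[OF G(1)] G(2) w0(1)] by blast
  have "wgraph w0 G \<le> wgraph w G"
    using w0(1) w(2) by (intro wgraph_mono_weights) (auto simp: weighting_def)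
  then show ?thesis using that w(1) w0(2) by fastforce
qed

lemma prod_shift_ge:
  fixes w :: "nat \<Rightarrow> real"
  assumes e: "finite e" and uv: "u \<noteq> v" and w: "\<And>x. 0 \<le> w x \<and> w x \<le> 1" and \<epsilon>: "0 \<le> \<epsilon>"
  shows "(\<Prod>x\<in>e. (w(u := w u + \<epsilon>, v := w v - \<epsilon>)) x)
           \<ge> (\<Prod>x\<in>e. w x) + \<epsilon> * ((if u \<in> e then \<Prod>x\<in>e - {u}. w x else 0)
                                  - (if v \<in> e then \<Prod>x\<in>e - {v}. w x else 0)) - \<epsilon>\<^sup>2"
proof -
  define w' where "w' = w(u := w u + \<epsilon>, v := w v - \<epsilon>)"
  have w'_eq: "(\<Prod>x\<in>A. w' x) = (\<Prod>x\<in>A. w x)" if "u \<notin> A" "v \<notin> A" for A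
    unfolding w'_def using that by (intro prod.cong) auto
  have "\<epsilon>\<^sup>2 \<ge> 0" by simp
  consider "u \<in> e" "v \<in> e" | "u \<in> e" "v \<notin> e" | "u \<notin> e" "v \<in> e" | "u \<notin> e" "v \<notin> e"
    by blast
  then have "(\<Prod>x\<in>e. w' x) \<ge> (\<Prod>x\<in>e. w x) + \<epsilon> * ((if u \<in> e then \<Prod>x\<in>e - {u}. w x else 0)
                                  - (if v \<in> e then \<Prod>x\<in>e - {v}. w x else 0)) - \<epsilon>\<^sup>2"
  proof cases
    case 1
    define P where "P = (\<Prod>x\<in>e - {u} - {v}. w x)"
    have "0 \<le> P" "P \<le> 1" unfolding P_def using w by (auto intro: prod_nonneg prod_le_1)
    then have "\<epsilon>\<^sup>2 * P \<le> \<epsilon>\<^sup>2" by (simp add: mult_left_le)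
    have "(\<Prod>x\<in>e - {u} - {v}. w' x) = P" unfolding P_def by (rule w'_eq) auto
    moreover have "(\<Prod>x\<in>e. w' x) = w' u * (w' v * (\<Prod>x\<in>e - {u} - {v}. w' x))"
      using e 1 uv by (simp add: prod.remove)
    ultimately have "(\<Prod>x\<in>e. w' x) = (w u + \<epsilon>) * ((w v - \<epsilon>) * P)"
      using uv by (simp add: w'_def)
    moreover have "(\<Prod>x\<in>e. w x) = w u * (w v * P)" "(\<Prod>x\<in>e - {u}. w x) = w v * P"
      unfolding P_def using e 1 uv by (simp_all add: prod.remove)
    moreover have "(\<Prod>x\<in>e - {v}. w x) = w u * P"
      unfolding P_def using e 1 uv by (simp add: prod.remove Diff_insert2[symmetric] insert_commute)
    ultimately show ?thesis using 1 \<open>\<epsilon>\<^sup>2 * P \<le> \<epsilon>\<^sup>2\<close> by (simp add: algebra_simps power2_eq_square)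
  next
    case 2
    have "(\<Prod>x\<in>e. w' x) = (w u + \<epsilon>) * (\<Prod>x\<in>e - {u}. w x)"
      using e 2 uv w'_eq[of "e - {u}"] by (simp add: prod.remove w'_def)
    moreover have "(\<Prod>x\<in>e. w x) = w u * (\<Prod>x\<in>e - {u}. w x)" using e 2 by (simp add: prod.remove)
    ultimately show ?thesis using 2 \<open>\<epsilon>\<^sup>2 \<ge> 0\<close> by (simp add: algebra_simps)
  next
    case 3
    have "(\<Prod>x\<in>e. w' x) = (w v - \<epsilon>) * (\<Prod>x\<in>e - {v}. w x)"
      using e 3 uv w'_eq[of "e - {v}"] by (simp add: prod.remove w'_def)
    moreover have "(\<Prod>x\<in>e. w x) = w v * (\<Prod>x\<in>e - {v}. w x)" using e 3 by (simp add: prod.remove)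
    ultimately show ?thesis using 3 \<open>\<epsilon>\<^sup>2 \<ge> 0\<close> by (simp add: algebra_simps; linarith)
  next
    case 4
    then show ?thesis using w'_eq[of e] \<open>\<epsilon>\<^sup>2 \<ge> 0\<close> by simp
  qed
  then show ?thesis unfolding w'_def .
qed

lemma wgraph_shift_ge:
  fixes w :: "nat \<Rightarrow> real"
  assumes G: "finite G" "\<And>e. e \<in> G \<Longrightarrow> finite e" and uv: "u \<noteq> v"
    and w: "\<And>x. 0 \<le> w x \<and> w x \<le> 1" and \<epsilon>: "0 \<le> \<epsilon>"
  shows "wgraph (w(u := w u + \<epsilon>, v := w v - \<epsilon>)) G
           \<ge> wgraph w G + \<epsilon> * (wgraph_deriv G w u - wgraph_deriv G w v) - \<epsilon>\<^sup>2 * real (card G)"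
proof -
  have "wgraph w G + \<epsilon> * (wgraph_deriv G w u - wgraph_deriv G w v) - \<epsilon>\<^sup>2 * real (card G)
    = (\<Sum>e\<in>G. (\<Prod>x\<in>e. w x) + \<epsilon> * ((if u \<in> e then \<Prod>x\<in>e - {u}. w x else 0)
                                 - (if v \<in> e then \<Prod>x\<in>e - {v}. w x else 0)) - \<epsilon>\<^sup>2)"
    unfolding wgraph_def wgraph_deriv_eq_sum[OF G(1)]
    by (simp add: sum.distrib sum_subtractf right_diff_distrib sum_distrib_left)
  also have "\<dots> \<le> wgraph (w(u := w u + \<epsilon>, v := w v - \<epsilon>)) G"
    unfolding wgraph_def by (intro sum_mono prod_shift_ge G(2) uv w \<epsilon>)
  finally show ?thesis .
qed

lemma wgraph_deriv_le_of_near_max: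
  assumes G: "rgraph r G" and w: "weighting_on (\<Union>G) w" and u: "u \<in> \<Union>G" and v: "v \<in> \<Union>G"
    and \<epsilon>: "0 < \<epsilon>" "\<epsilon> \<le> w v" and near_max: "lagrangian G - \<epsilon>\<^sup>2 < wgraph w G"
  shows "wgraph_deriv G w u \<le> wgraph_deriv G w v + \<epsilon> * (1 + real (card G))"
proof (cases "u = v")
  case True
  then show ?thesis using \<epsilon> by simp
next
  case False
  note V = rgraph_subset_complete_rgraph[OF G]
  have fin: "finite G" "\<And>e. e \<in> G \<Longrightarrow> finite e" using G unfolding rgraph_def by auto
  have w01: "0 \<le> w x \<and> w x \<le> 1" for x
    using w weighting_on_le_1[OF V(1) w] unfolding weighting_on_def by blast
  \<comment> \<open>otherwise shifting \<open>\<epsilon>\<close> of weight from \<open>v\<close> to \<open>u\<close> would push \<open>w(G)\<close> above \<open>\<lambda>(G)\<close>\<close>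
  define w' where "w' = w(u := w u + \<epsilon>, v := w v - \<epsilon>)"
  have w'_alt: "w' x = w x + (if x = u then \<epsilon> else 0) - (if x = v then \<epsilon> else 0)" for x
    unfolding w'_def using False by auto
  have "weighting_on (\<Union>G) w'"
    using w u v \<epsilon> w01 False unfolding weighting_on_def w'_alt
    by (auto simp: sum.distrib sum_subtractf V(1))
  then have "wgraph w' G \<le> lagrangian G"
    by (intro wgraph_le_lagrangian[OF G] weighting_on_imp_weighting[OF V(1)])
  moreover have "wgraph w' G \<ge> wgraph w G + \<epsilon> * (wgraph_deriv G w u - wgraph_deriv G w v) - \<epsilon>\<^sup>2 * real (card G)"
    unfolding w'_def using \<epsilon> by (intro wgraph_shift_ge fin False w01) auto
  ultimately have "\<epsilon> * (wgraph_deriv G w u - wgraph_deriv G w v) < \<epsilon> * (\<epsilon> * (1 + real (card G)))"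
    using near_max by (simp add: algebra_simps power2_eq_square)
  then show ?thesis using \<epsilon> by simp
qed

lemma wgraph_le_of_near_max:
  assumes r: "r \<ge> 1" and G: "rgraph r G" and w: "weighting_on (\<Union>G) w" and v: "v \<in> \<Union>G"
    and \<epsilon>: "0 < \<epsilon>" "\<epsilon> \<le> w v" and near_max: "lagrangian G - \<epsilon>\<^sup>2 < wgraph w G"
  shows "real r * wgraph w G \<le> (1 - w v) ^ (r - 1) / fact (r - 1) + \<epsilon> * (1 + real (card G))"
proof -
  let ?V = "\<Union>G" and ?\<delta> = "\<epsilon> * (1 + real (card G))"
  note V = rgraph_subset_complete_rgraph[OF G]
  have w_nonneg: "0 \<le> w x" for x using w unfolding weighting_on_def by blast
  have "real r * wgraph w G = (\<Sum>u\<in>?V. w u * wgraph_deriv G w u)"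
    using euler_wgraph_deriv[OF V] by simp
  also have "\<dots> \<le> (\<Sum>u\<in>?V. w u * (wgraph_deriv G w v + ?\<delta>))"
    by (intro sum_mono mult_left_mono wgraph_deriv_le_of_near_max[OF G w _ v \<epsilon> near_max] w_nonneg)
  also have "\<dots> = wgraph_deriv G w v + ?\<delta>"
    using w unfolding weighting_on_def by (simp add: sum_distrib_right[symmetric])
  also have "wgraph_deriv G w v \<le> esym (r - 1) (?V - {v}) w"
    using wgraph_deriv_mono[of G "complete_rgraph ?V r" w v] V finite_complete_rgraph[OF V(1)] w_nonneg
      wgraph_deriv_complete_rgraph[OF V(1) v r] by simp
  also have "\<dots> \<le> (1 - w v) ^ (r - 1) / fact (r - 1)"
  proof -
    have s: "(\<Sum>x\<in>?V - {v}. w x) = 1 - w v"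
      using w v V(1) unfolding weighting_on_def by (simp add: sum_diff1)
    have "fact (r - 1) * esym (r - 1) (?V - {v}) w \<le> (1 - w v) ^ (r - 1)"
      using fact_esym_le_power_sum[of "?V - {v}" w "r - 1"] V(1) w_nonneg unfolding s by simp
    then show ?thesis by (simp add: field_simps)
  qed
  finally show ?thesis by simp
qed

lemma lagrangian_le_of_spread_approx:
  assumes r: "r \<ge> 1" and G: "rgraph r G" "\<Union>G \<noteq> {}" and \<epsilon>: "0 < \<epsilon>" "\<epsilon> \<le> \<eta>" "\<epsilon> \<le> 1"
    and concentrated: "(1 - \<eta>) ^ (r - 1) / fact r \<le> T"
    and spread: "\<And>w. weighting_on (\<Union>G) w \<Longrightarrow> (\<And>x. x \<in> \<Union>G \<Longrightarrow> w x \<le> \<eta>) \<Longrightarrow> wgraph w G \<le> T"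
  shows "lagrangian G \<le> T + \<epsilon> * (2 + real (card G))"
proof -
  let ?V = "\<Union>G"
  define n where "n = real (card G)"
  note V = rgraph_subset_complete_rgraph[OF G(1)]
  have "0 \<le> n" "\<epsilon>\<^sup>2 \<le> \<epsilon>" using \<epsilon> by (simp_all add: n_def power2_eq_square mult_left_le)
  obtain w where w: "weighting_on ?V w" and near_max: "lagrangian G - \<epsilon>\<^sup>2 < wgraph w G"
    using lagrangian_approx_by_weighting_on[OF G] \<epsilon>(1) by (metis zero_less_power)
  have "Max (w ` ?V) \<in> w ` ?V" using V(1) G(2) by simp
  then obtain v where v: "v \<in> ?V" "w v = Max (w ` ?V)" by (metis imageE)
  have v_max: "w x \<le> w v" if "x \<in> ?V" for x using v V(1) that by simp
  have "wgraph w G \<le> T + \<epsilon> * (1 + n)"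
  proof (cases "w v \<le> \<eta>")
    case True
    then have "wgraph w G \<le> T" using v_max by (intro spread[OF w]) (meson order_trans)
    moreover have "0 \<le> \<epsilon> * (1 + n)" using \<epsilon>(1) \<open>0 \<le> n\<close> by simp
    ultimately show ?thesis by linarith
  next
    case False
    have "fact r = real r * fact (r - 1)" using r by (simp add: fact_reduce)
    have "real r * wgraph w G \<le> (1 - w v) ^ (r - 1) / fact (r - 1) + \<epsilon> * (1 + n)"
      unfolding n_def using False \<epsilon> by (intro wgraph_le_of_near_max[OF r G(1) w v(1) \<epsilon>(1) _ near_max]) auto
    also have "(1 - w v) ^ (r - 1) / fact (r - 1) \<le> (1 - \<eta>) ^ (r - 1) / fact (r - 1)"
      using False weighting_on_le_1[OF V(1) w, of v] by (intro divide_right_mono power_mono) auto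
    also have "(1 - \<eta>) ^ (r - 1) / fact (r - 1) = real r * ((1 - \<eta>) ^ (r - 1) / fact r)"
      using r unfolding \<open>fact r = real r * fact (r - 1)\<close> by simp
    also have "\<dots> \<le> real r * T" using concentrated by (intro mult_left_mono) auto
    also have "\<epsilon> * (1 + n) \<le> real r * (\<epsilon> * (1 + n))"
      using mult_right_mono[of 1 "real r" "\<epsilon> * (1 + n)"] r \<epsilon>(1) \<open>0 \<le> n\<close> by simp
    finally have "real r * wgraph w G \<le> real r * (T + \<epsilon> * (1 + n))"
      by (simp add: algebra_simps)
    then show ?thesis using r by simp
  qed
  then show ?thesis
    using near_max \<open>\<epsilon>\<^sup>2 \<le> \<epsilon>\<close> unfolding n_def by (simp add: algebra_simps)
qed

lemma lagrangian_le_of_spread: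
  assumes r: "r \<ge> 1" and G: "rgraph r G" and T: "0 \<le> T" and \<eta>: "0 < \<eta>"
    and concentrated: "(1 - \<eta>) ^ (r - 1) / fact r \<le> T"
    and spread: "\<And>w. weighting_on (\<Union>G) w \<Longrightarrow> (\<And>x. x \<in> \<Union>G \<Longrightarrow> w x \<le> \<eta>) \<Longrightarrow> wgraph w G \<le> T"
  shows "lagrangian G \<le> T"
proof (cases "\<Union>G = {}")
  case True
  then have "G = {}" using G r unfolding rgraph_def by force
  then show ?thesis using T by (intro lagrangian_le) (simp add: wgraph_def)
next
  case False
  define n where "n = real (card G)"
  show ?thesis
  proof (rule field_le_epsilon)
    fix \<delta> :: real assume "0 < \<delta>"
    define \<epsilon> where "\<epsilon> = min (min \<eta> 1) (\<delta> / (2 + n))"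
    have "0 \<le> n" by (simp add: n_def)
    have \<epsilon>: "0 < \<epsilon>" "\<epsilon> \<le> \<eta>" "\<epsilon> \<le> 1"
      using \<eta> \<open>0 < \<delta>\<close> \<open>0 \<le> n\<close> by (auto simp: \<epsilon>_def)
    have "\<epsilon> * (2 + n) \<le> \<delta>"
      using \<open>0 \<le> n\<close> min.cobounded2[of "min \<eta> 1" "\<delta> / (2 + n)"] unfolding \<epsilon>_def[symmetric]
      by (simp add: le_divide_eq)
    moreover have "lagrangian G \<le> T + \<epsilon> * (2 + n)"
      unfolding n_def using spread by (rule lagrangian_le_of_spread_approx[OF r G False \<epsilon> concentrated])
    ultimately show "lagrangian G \<le> T + \<delta>" by linarith
  qed
qed

section \<open>Numerical estimates\<close>

lemma one_minus_power_le:
  fixes x :: real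
  assumes "0 \<le> x" "x \<le> 1"
  shows "(1 - x) ^ n \<le> 1 - real n * x + real n * (real n - 1) / 2 * x\<^sup>2"
proof (induction n)
  case 0
  then show ?case by simp
next
  case (Suc n)
  have "(1 - x) ^ Suc n \<le> (1 - x) * (1 - real n * x + real n * (real n - 1) / 2 * x\<^sup>2)"
    using mult_left_mono[OF Suc.IH, of "1 - x"] assms by simp
  also have "\<dots> = 1 - real (Suc n) * x + real (Suc n) * (real (Suc n) - 1) / 2 * x\<^sup>2
                   - real n * (real n - 1) / 2 * x ^ 3"
    by (simp add: field_simps power2_eq_square power3_eq_cube)
  also have "\<dots> \<le> 1 - real (Suc n) * x + real (Suc n) * (real (Suc n) - 1) / 2 * x\<^sup>2"
    using assms by (cases n) simp_all
  finally show ?case .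
qed

lemma power_one_minus_le:
  fixes r :: nat and t :: real
  defines "R \<equiv> real r * (real r - 1) / 2"
  assumes r: "1 \<le> r" "real r \<le> t" and t: "real r ^ 4 + 2 * R + 1 \<le> R * t"
  shows "(1 - real r / t) ^ (r - 1) \<le> 1 - R / t - (2 * R + 1) / t\<^sup>2"
proof -
  define Q where "Q = (real r - 1) * (real r - 2) / 2 * (real r)\<^sup>2"
  have "t > 0" using r by linarith
  have "1 \<le> real r" using r by simp
  then have "1 \<le> real r * real r" using mult_mono[of 1 "real r" 1 "real r"] by simp
  with \<open>1 \<le> real r\<close> have "(real r - 1) * (real r - 2) / 2 \<le> (real r)\<^sup>2"
    by (simp add: power2_eq_square algebra_simps)
  then have "Q \<le> real r ^ 4"
    unfolding Q_def using mult_right_mono[of _ _ "(real r)\<^sup>2"] by (fastforce simp: power4_eq_xxxx power2_eq_square)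
  have "(1 - real r / t) ^ (r - 1)
          \<le> 1 - real (r - 1) * (real r / t) + real (r - 1) * (real (r - 1) - 1) / 2 * (real r / t)\<^sup>2"
    by (rule one_minus_power_le) (use r \<open>t > 0\<close> in auto)
  also have "\<dots> = 1 - 2 * R / t + Q / t\<^sup>2"
    unfolding R_def Q_def using r \<open>t > 0\<close> by (simp add: field_simps power2_eq_square)
  also have "\<dots> \<le> 1 - 2 * R / t + (R * t - 2 * R - 1) / t\<^sup>2"
    using t \<open>Q \<le> real r ^ 4\<close> by (simp add: divide_right_mono)
  also have "\<dots> = 1 - R / t - (2 * R + 1) / t\<^sup>2"
    using \<open>t > 0\<close> by (simp add: field_simps power2_eq_square)
  finally show ?thesis .
qed

lemma one_minus_div_le:
  fixes R t :: real
  assumes "0 \<le> R" "2 * R + 1 \<le> t"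
  shows "1 - (R + 1) / t \<le> 1 - R / t - (2 * R + 1) / t\<^sup>2"
proof -
  have "(2 * R + 1) / t\<^sup>2 \<le> t / t\<^sup>2" using assms by (intro divide_right_mono) auto
  also have "\<dots> = 1 / t" by (simp add: power2_eq_square)
  finally show ?thesis by (simp add: add_divide_distrib)
qed

lemma one_minus_le_of_large_q:
  fixes R p t q X :: real
  assumes R: "2 \<le> R" and p: "1 \<le> p" and t: "R + 3 + p < t" "p \<le> R * t"
    and q: "1 - (R + 1) / t < (t - (R + 3 + p)) * q"
    and X: "X \<le> 1 - R * q + p / t * q"
  shows "X \<le> 1 - R / t - (2 * R + 1) / t\<^sup>2"
proof -
  define E where "E = R + 3 + p"
  have "t > 0" "t - E > 0" "t - (R + 1) > 0" using R p t unfolding E_def by linarith+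
  have q_ge: "(t - (R + 1)) / (t * (t - E)) < q"
    using q \<open>t > 0\<close> \<open>t - E > 0\<close> unfolding E_def[symmetric] by (simp add: field_simps)
  have "0 \<le> R - p / t" using t(2) \<open>t > 0\<close> by (simp add: field_simps)
  \<comment> \<open>\<open>(R - 1) p \<ge> 1\<close>, which is what the choice \<open>E = R + 3 + p\<close> buys, makes all coefficients nonnegative\<close>
  have "1 * 1 \<le> (R - 1) * p" using R p by (intro mult_mono) auto
  then have "0 \<le> t * ((R - 1) * p - 1)" using \<open>t > 0\<close> by simp
  moreover have "0 \<le> p * (R + 1)" "0 \<le> (2 * R + 1) * E" using R p unfolding E_def by simp_all
  moreover have "(R * t - p) * (t - (R + 1)) - (R * t + 2 * R + 1) * (t - E)
                   = t * ((R - 1) * p - 1) + p * (R + 1) + (2 * R + 1) * E"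
    unfolding E_def by (simp add: algebra_simps)
  ultimately have poly: "(R * t + 2 * R + 1) * (t - E) \<le> (R * t - p) * (t - (R + 1))"
    by linarith
  have "R / t + (2 * R + 1) / t\<^sup>2 = (R * t + 2 * R + 1) * (t - E) / (t\<^sup>2 * (t - E))"
    using \<open>t > 0\<close> \<open>t - E > 0\<close> by (simp add: field_simps power2_eq_square)
  also have "\<dots> \<le> (R * t - p) * (t - (R + 1)) / (t\<^sup>2 * (t - E))"
    by (rule divide_right_mono[OF poly]) (use \<open>t > 0\<close> \<open>t - E > 0\<close> in simp)
  also have "\<dots> = (R - p / t) * ((t - (R + 1)) / (t * (t - E)))"
    using \<open>t > 0\<close> by (simp add: field_simps power2_eq_square)
  also have "\<dots> \<le> (R - p / t) * q"
    using q_ge \<open>0 \<le> R - p / t\<close> by (intro mult_left_mono) auto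
  finally show ?thesis using X by (simp add: algebra_simps)
qed

lemma large_t_bounds:
  fixes r :: nat and t :: real
  defines "R \<equiv> real r * (real r - 1) / 2"
  assumes r: "r \<ge> 3" and t: "3 * real r ^ 5 \<le> t"
  shows "2 \<le> R" "R + 3 + real r ^ 5 < t" "real r ^ 5 \<le> R * t" "real r ^ 4 + 2 * R + 1 \<le> R * t"
    "2 * R + 1 \<le> t" "real r + 1 \<le> t"
proof -
  have x: "3 \<le> real r" using r by simp
  have powers: "real r \<le> (real r)\<^sup>2" "(real r)\<^sup>2 \<le> real r ^ 4" "real r ^ 4 \<le> real r ^ 5"
    using x self_le_power[of "real r" 2] power_increasing[of _ _ "real r"] by simp_all
  have "3 * 2 \<le> real r * (real r - 1)" using x by (intro mult_mono) auto
  then have "3 \<le> R" unfolding R_def by simp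
  have "R \<le> (real r)\<^sup>2 / 2" unfolding R_def by (simp add: power2_eq_square algebra_simps)
  have "0 \<le> t" using t by (simp add: order_trans[OF _ t])
  then have "t \<le> R * t" using mult_right_mono[of 1 R t] \<open>3 \<le> R\<close> by simp
  show "2 \<le> R" "R + 3 + real r ^ 5 < t" "real r ^ 5 \<le> R * t" "real r ^ 4 + 2 * R + 1 \<le> R * t"
    "2 * R + 1 \<le> t" "real r + 1 \<le> t"
    using t x powers \<open>3 \<le> R\<close> \<open>R \<le> (real r)\<^sup>2 / 2\<close> \<open>t \<le> R * t\<close> by linarith+
qed

lemma inverse_square_le_gap:
  fixes R t :: real
  assumes "0 \<le> R" "2 \<le> t"
  shows "1 / t\<^sup>2 \<le> (1 - R / (t - 1)) - (1 - R / t - (2 * R + 1) / t\<^sup>2)"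
proof -
  have "0 \<le> t * (t - 2)" using assms by simp
  then have "t\<^sup>2 / 2 \<le> t * (t - 1)" by (simp add: power2_eq_square algebra_simps)
  then have "R / (t * (t - 1)) \<le> R / (t\<^sup>2 / 2)" using assms by (intro divide_left_mono) auto
  moreover have "R / (t - 1) - R / t = R / (t * (t - 1))" using assms by (simp add: field_simps)
  moreover have "(2 * R + 1) / t\<^sup>2 = R / (t\<^sup>2 / 2) + 1 / t\<^sup>2"
    using assms by (simp add: field_simps power2_eq_square)
  ultimately show ?thesis by linarith
qed

section \<open>Lagrangians of \<open>r\<close>-graphs with few edges\<close>

lemma fact_wgraph_sq_le:
  assumes G: "rgraph r G" and w: "\<And>x. 0 \<le> w x"
  shows "(fact r * wgraph w G)\<^sup>2 \<le> fact r * real (card G) * (\<Sum>x\<in>\<Union>G. (w x)\<^sup>2) ^ r"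
proof -
  let ?V = "\<Union>G" and ?w2 = "\<lambda>x. (w x)\<^sup>2"
  note V = rgraph_subset_complete_rgraph[OF G]
  have "(wgraph w G)\<^sup>2 \<le> (\<Sum>e\<in>G. (\<Prod>x\<in>e. w x)\<^sup>2) * real (card G)"
    unfolding wgraph_def by (rule sum_squared_le_sum_of_squares)
  also have "(\<Sum>e\<in>G. (\<Prod>x\<in>e. w x)\<^sup>2) = wgraph ?w2 G"
    unfolding wgraph_def by (simp add: prod_power_distrib)
  also have "wgraph ?w2 G \<le> esym r ?V ?w2"
    unfolding esym_def by (intro wgraph_mono V finite_complete_rgraph) simp
  finally have "(wgraph w G)\<^sup>2 \<le> esym r ?V ?w2 * real (card G)" by (simp add: mult_right_mono)
  then have "(fact r * wgraph w G)\<^sup>2 \<le> fact r * real (card G) * (fact r * esym r ?V ?w2)"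
    by (simp add: power2_eq_square mult_left_mono algebra_simps)
  also have "\<dots> \<le> fact r * real (card G) * (\<Sum>x\<in>?V. ?w2 x) ^ r"
    by (intro mult_left_mono fact_esym_le_power_sum V) simp_all
  finally show ?thesis .
qed

lemma fact_wgraph_le_of_spread:
  fixes r :: nat and t :: real and G :: "nat set set"
  defines "R \<equiv> real r * (real r - 1) / 2"
  assumes r: "r \<ge> 3" and t: "3 * real r ^ 5 \<le> t" and G: "rgraph r G"
    and card_G: "fact r * real (card G) \<le> (t - (R + 3 + real r ^ 5)) ^ r"
    and w: "weighting_on (\<Union>G) w" and spread: "\<And>x. x \<in> \<Union>G \<Longrightarrow> w x \<le> real r / t"
  shows "fact r * wgraph w G \<le> 1 - R / t - (2 * R + 1) / t\<^sup>2"
proof -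
  define y where "y = t - (R + 3 + real r ^ 5)"
  define q where "q = (\<Sum>x\<in>\<Union>G. (w x)\<^sup>2)"
  define X where "X = fact r * wgraph w G"
  note large = large_t_bounds[OF r t, folded R_def]
  have "t > 0" "y > 0" using large(2,6) unfolding y_def by simp_all
  have w_nonneg: "0 \<le> w x" for x using w unfolding weighting_on_def by blast
  have "q \<ge> 0" unfolding q_def by (simp add: sum_nonneg)
  have "X\<^sup>2 \<le> fact r * real (card G) * q ^ r"
    unfolding X_def q_def by (rule fact_wgraph_sq_le[OF G w_nonneg])
  also have "\<dots> \<le> y ^ r * q ^ r"
    using card_G \<open>q \<ge> 0\<close> unfolding y_def by (intro mult_right_mono) simp_all
  finally have X_sq: "X\<^sup>2 \<le> (y * q) ^ r" by (simp add: power_mult_distrib)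
  have "X \<le> fact r * esym r (\<Union>G) w"
    unfolding X_def esym_def using rgraph_subset_complete_rgraph[OF G] w_nonneg
    by (intro mult_left_mono wgraph_mono finite_complete_rgraph) simp_all
  also have "\<dots> \<le> 1 - R * q + (real r) ^ 4 * (real r / t) * q"
    using fact_esym_le[OF rgraph_subset_complete_rgraph(1)[OF G] w_nonneg _ spread] w
    unfolding R_def q_def weighting_on_def by simp
  also have "(real r) ^ 4 * (real r / t) * q = real r ^ 5 / t * q"
    by (simp add: power_Suc2[symmetric] del: power_Suc)
  finally have X_le: "X \<le> 1 - R * q + real r ^ 5 / t * q" .
  show ?thesis
  proof (cases "y * q \<le> 1 - (R + 1) / t")
    case True
    have "0 \<le> y * q" using \<open>y > 0\<close> \<open>q \<ge> 0\<close> by simp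
    moreover have "0 \<le> (R + 1) / t" using large(1) \<open>t > 0\<close> by simp
    ultimately have "(y * q) ^ r \<le> (y * q)\<^sup>2" using r True by (intro power_decreasing) auto
    then have "X\<^sup>2 \<le> (y * q)\<^sup>2" using X_sq by linarith
    then have "X \<le> y * q" using \<open>0 \<le> y * q\<close> by (rule power2_le_imp_le)
    moreover have "1 - (R + 1) / t \<le> 1 - R / t - (2 * R + 1) / t\<^sup>2"
      using large(1,5) by (intro one_minus_div_le) auto
    ultimately show ?thesis using True unfolding X_def by linarith
  next
    case False
    have "1 \<le> real r ^ 5" using r by simp
    then show ?thesis
      using one_minus_le_of_large_q[OF large(1) _ large(2,3) _ X_le] False unfolding X_def y_def by simp
  qed
qed

lemma lagrangian_le_of_card:
  fixes r :: nat and t :: real and G :: "nat set set"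
  defines "R \<equiv> real r * (real r - 1) / 2"
  assumes r: "r \<ge> 3" and t: "3 * real r ^ 5 \<le> t" and G: "rgraph r G"
    and card_G: "fact r * real (card G) \<le> (t - (R + 3 + real r ^ 5)) ^ r"
  shows "lagrangian G \<le> (1 - R / t - (2 * R + 1) / t\<^sup>2) / fact r"
proof (rule lagrangian_le_of_spread[of r G _ "real r / t"])
  note large = large_t_bounds[OF r t, folded R_def]
  have "t > 0" using large(6) by simp
  have concentrated: "(1 - real r / t) ^ (r - 1) \<le> 1 - R / t - (2 * R + 1) / t\<^sup>2"
    using r large(4,6) unfolding R_def by (intro power_one_minus_le) auto
  moreover have "0 \<le> (1 - real r / t) ^ (r - 1)" using large(6) \<open>t > 0\<close> by simp
  ultimately show "0 \<le> (1 - R / t - (2 * R + 1) / t\<^sup>2) / fact r" by simp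
  show "(1 - real r / t) ^ (r - 1) / fact r \<le> (1 - R / t - (2 * R + 1) / t\<^sup>2) / fact r"
    using concentrated by (simp add: divide_right_mono)
  show "1 \<le> r" "rgraph r G" "0 < real r / t" using r G \<open>t > 0\<close> by simp_all
next
  fix w assume "weighting_on (\<Union>G) w" "\<And>x. x \<in> \<Union>G \<Longrightarrow> w x \<le> real r / t"
  then have "fact r * wgraph w G \<le> 1 - R / t - (2 * R + 1) / t\<^sup>2"
    unfolding R_def by (intro fact_wgraph_le_of_spread[OF r t G card_G[unfolded R_def]])
  then show "wgraph w G \<le> (1 - R / t - (2 * R + 1) / t\<^sup>2) / fact r"
    by (simp add: pos_le_divide_eq mult.commute)
qed

section \<open>Bounds for \<open>\<Lambda>(m, r)\<close>\<close>

lemma lagrangian_mono: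
  assumes "G \<subseteq> G'" "rgraph r G'"
  shows "lagrangian G \<le> lagrangian G'"
proof (rule lagrangian_le)
  fix w assume w: "weighting w"
  have "finite G'" using assms(2) unfolding rgraph_def by blast
  then have "wgraph w G \<le> wgraph w G'"
    using assms(1) w by (intro wgraph_mono) (auto simp: weighting_def)
  also have "\<dots> \<le> lagrangian G'" by (rule wgraph_le_lagrangian[OF assms(2) w])
  finally show "wgraph w G \<le> lagrangian G'" .
qed

lemma lagrangian_complete_rgraph_ge:
  assumes "n > 0"
  shows "lagrangian (complete_rgraph {..<n} r) \<ge> real (n choose r) / real n ^ r"
proof -
  define u where "u x = (if x < n then 1 / real n else 0)" for x
  have "weighting_on {..<n} u" using assms unfolding weighting_on_def u_def by auto
  then have "weighting u" by (rule weighting_on_imp_weighting[rotated]) simp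
  have "wgraph u (complete_rgraph {..<n} r) = (\<Sum>e\<in>complete_rgraph {..<n} r. (1 / real n) ^ r)"
    unfolding wgraph_def
  proof (intro sum.cong refl)
    fix e assume "e \<in> complete_rgraph {..<n} r"
    then have "e \<subseteq> {..<n}" "card e = r" unfolding complete_rgraph_def by auto
    then have "(\<Prod>x\<in>e. u x) = (\<Prod>x\<in>e. 1 / real n)" by (intro prod.cong) (auto simp: u_def)
    then show "(\<Prod>x\<in>e. u x) = (1 / real n) ^ r" using \<open>card e = r\<close> by simp
  qed
  also have "\<dots> = real (n choose r) / real n ^ r"
    by (simp add: card_complete_rgraph power_divide)
  finally have "wgraph u (complete_rgraph {..<n} r) = real (n choose r) / real n ^ r" .
  moreover have "wgraph u (complete_rgraph {..<n} r) \<le> lagrangian (complete_rgraph {..<n} r)"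
    by (intro wgraph_le_lagrangian[of r] rgraph_complete_rgraph finite_lessThan \<open>weighting u\<close>)
  ultimately show ?thesis by simp
qed

lemma sum_lessThan_of_nat: "(\<Sum>i<r. real i) = real r * (real r - 1) / 2"
  by (induction r) (simp_all add: field_simps)

lemma fact_mult_binomial_eq_prod: "fact r * real (n choose r) = (\<Prod>i<r. real n - real i)"
  by (simp add: binomial_gbinomial gbinomial_mult_fact atLeast0LessThan)

lemma binomial_div_power_ge:
  assumes "r \<le> n" "n > 0"
  shows "real (n choose r) / real n ^ r \<ge> (1 - real r * (real r - 1) / 2 / real n) / fact r"
proof -
  define P where "P = (\<Prod>i<r. 1 - real i / real n)"
  have "fact r * real (n choose r) = (\<Prod>i<r. real n * (1 - real i / real n))"
    unfolding fact_mult_binomial_eq_prod using assms(2) by (intro prod.cong) (auto simp: field_simps)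
  also have "\<dots> = real n ^ r * P"
    unfolding P_def by (simp add: prod.distrib)
  finally have "real (n choose r) / real n ^ r = P / fact r"
    using assms(2) by (simp add: field_simps)
  moreover have "P \<ge> 1 - (\<Sum>i<r. real i / real n)"
    unfolding P_def by (rule Weierstrass_prod_ineq) (use assms in auto)
  moreover have "(\<Sum>i<r. real i / real n) = real r * (real r - 1) / 2 / real n"
    by (simp add: sum_divide_distrib[symmetric] sum_lessThan_of_nat)
  ultimately show ?thesis by (simp add: divide_right_mono)
qed

lemma fact_mult_binomial_le_power:
  assumes "r \<le> t"
  shows "fact r * real (t choose r) \<le> real t ^ r"
proof -
  have "(\<Prod>i<r. real t - real i) \<le> (\<Prod>i<r. real t)" by (intro prod_mono) (use assms in auto)
  then show ?thesis by (simp add: fact_mult_binomial_eq_prod)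
qed

lemma ex_rgraph_containing_complete:
  assumes r: "r \<ge> 1" and m: "n choose r \<le> m"
  obtains G where "rgraph r G" "card G = m" "complete_rgraph {..<n} r \<subseteq> G"
proof -
  \<comment> \<open>\<open>K\<^sub>N\<close> has at least \<open>m\<close> edges for \<open>N = r (m + n + 1)\<close>, since \<open>(N / r)\<^sup>r \<le> N choose r\<close>\<close>
  define N where "N = r * (m + n + 1)"
  have "n \<le> N" using r unfolding N_def by (metis le_add2 le_trans mult_le_mono1 mult_1 add.commute)
  have "real m \<le> real (m + n + 1) ^ r" using r by (intro order_trans[OF _ self_le_power]) auto
  also have "\<dots> = (real N / real r) ^ r" using r unfolding N_def of_nat_mult by simp
  also have "\<dots> \<le> real (N choose r)"
    by (rule binomial_ge_n_over_k_pow_k) (use r in \<open>simp add: N_def\<close>)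
  finally have "m \<le> N choose r" by simp
  then obtain G where "complete_rgraph {..<n} r \<subseteq> G" "G \<subseteq> complete_rgraph {..<N} r" "card G = m"
    using exists_subset_between[of "complete_rgraph {..<n} r" m "complete_rgraph {..<N} r"] m \<open>n \<le> N\<close>
    by (auto simp: card_complete_rgraph finite_complete_rgraph complete_rgraph_mono)
  moreover have "rgraph r G"
    using rgraph_complete_rgraph[of "{..<N}" r] \<open>G \<subseteq> complete_rgraph {..<N} r\<close>
    unfolding rgraph_def by (auto intro: finite_subset)
  ultimately show ?thesis using that by blast
qed

lemma bdd_above_lagrangian: "bdd_above (lagrangian ` {G. rgraph r G \<and> card G = m})"
  using lagrangian_le_1 by (intro bdd_aboveI[of _ 1]) blast

lemma lagrangian_le_Lam: "rgraph r G \<Longrightarrow> lagrangian G \<le> Lam (card G) r"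
  unfolding Lam_def by (rule cSUP_upper) (auto intro: bdd_above_lagrangian)

lemma Lam_le:
  assumes "r \<ge> 1" and "\<And>G. rgraph r G \<Longrightarrow> card G = m \<Longrightarrow> lagrangian G \<le> B"
  shows "Lam m r \<le> B"
proof -
  have "0 choose r \<le> m" using assms(1) by (simp add: binomial_eq_0)
  then obtain G where "rgraph r G" "card G = m"
    using ex_rgraph_containing_complete[OF assms(1)] by blast
  then show ?thesis unfolding Lam_def by (intro cSUP_least) (use assms(2) in auto)
qed

lemma Lam_ge:
  assumes r: "r \<ge> 1" and "r \<le> n" and "n choose r \<le> m"
  shows "Lam m r \<ge> (1 - real r * (real r - 1) / 2 / real n) / fact r"
proof -
  obtain G where G: "rgraph r G" "card G = m" "complete_rgraph {..<n} r \<subseteq> G"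
    using ex_rgraph_containing_complete[OF assms(1,3)] .
  have "n > 0" using assms by simp
  have "(1 - real r * (real r - 1) / 2 / real n) / fact r \<le> real (n choose r) / real n ^ r"
    by (rule binomial_div_power_ge) (use assms in auto)
  also have "\<dots> \<le> lagrangian (complete_rgraph {..<n} r)"
    by (rule lagrangian_complete_rgraph_ge[OF \<open>n > 0\<close>])
  also have "\<dots> \<le> lagrangian G" by (rule lagrangian_mono[OF G(3,1)])
  also have "\<dots> \<le> Lam m r" using lagrangian_le_Lam[OF G(1)] G(2) by simp
  finally show ?thesis .
qed


text \<open>Removing \<open>r E t\<^sup>r\<^sup>-\<^sup>1\<close> edges from at most \<open>t choose r \<le> t\<^sup>r / r!\<close> leaves at most
  \<open>(t - E)\<^sup>r / r!\<close>, by Bernoulli's inequality.\<close>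
lemma fact_mult_reduced_card_le:
  fixes r t m :: nat and E :: real
  assumes r: "r \<ge> 1" "r \<le> t" and E: "0 \<le> E" "E \<le> real t" and m: "m \<le> t choose r"
  shows "fact r * real (nat \<lfloor>real m - real r * E * real t ^ (r - 1)\<rfloor>) \<le> (real t - E) ^ r"
proof -
  define a where "a = real m - real r * E * real t ^ (r - 1)"
  have "real t > 0" using r by simp
  have "real t ^ r * (1 - real r * (E / real t)) \<le> real t ^ r * (1 - E / real t) ^ r"
    using Bernoulli_inequality[of "- (E / real t)" r] E \<open>real t > 0\<close> by (intro mult_left_mono) auto
  also have "\<dots> = (real t - E) ^ r"
    using \<open>real t > 0\<close> by (simp add: power_mult_distrib[symmetric] field_simps)
  also have "real t ^ r * (1 - real r * (E / real t)) = real t ^ r - real r * E * real t ^ (r - 1)"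
    using \<open>real t > 0\<close> r(1) by (simp add: field_simps power_eq_if)
  finally have bernoulli: "real t ^ r - real r * E * real t ^ (r - 1) \<le> (real t - E) ^ r" .
  show ?thesis
  proof (cases "a < 0")
    case True
    then show ?thesis using E unfolding a_def[symmetric] by simp
  next
    case False
    then have "fact r * real (nat \<lfloor>a\<rfloor>) \<le> fact r * a" by (intro mult_left_mono) auto
    also have "\<dots> \<le> fact r * real m - real r * E * real t ^ (r - 1)"
    proof -
      have "0 \<le> real r * E * real t ^ (r - 1)" using E by simp
      then have "1 * (real r * E * real t ^ (r - 1)) \<le> fact r * (real r * E * real t ^ (r - 1))"
        by (rule mult_right_mono[OF fact_ge_1])
      then show ?thesis unfolding a_def by (simp add: algebra_simps)
    qed
    also have "\<dots> \<le> real t ^ r - real r * E * real t ^ (r - 1)"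
    proof -
      have "fact r * real m \<le> fact r * real (t choose r)" using m by (intro mult_left_mono) auto
      then show ?thesis using fact_mult_binomial_le_power[OF r(2)] by linarith
    qed
    finally show ?thesis using bernoulli unfolding a_def by simp
  qed
qed

lemma Lam_gap_ge:
  fixes r t m :: nat
  defines "E \<equiv> real r * (real r - 1) / 2 + 3 + real r ^ 5"
  assumes r: "r \<ge> 3" and t: "3 * r ^ 5 \<le> t" and m: "(t - 1) choose r \<le> m" "m \<le> t choose r"
  shows "(1 / fact r) / (real t)\<^sup>2 \<le> Lam m r - Lam (nat \<lfloor>real m - (real r * E) * real t ^ (r - 1)\<rfloor>) r"
proof -
  define R where "R = real r * (real r - 1) / 2"
  have t': "3 * real r ^ 5 \<le> real t" using of_nat_le_iff[of "3 * r ^ 5" t, where 'a = real] t by simp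
  note large = large_t_bounds[OF r t', folded R_def]
  have "r \<le> t - 1" using large(6) by linarith
  have "0 \<le> E" "E \<le> real t" using large(1,2) unfolding E_def R_def[symmetric] by simp_all
  have low: "(1 - R / (real t - 1)) / fact r \<le> Lam m r"
    using Lam_ge[OF _ \<open>r \<le> t - 1\<close> m(1)] r \<open>r \<le> t - 1\<close> unfolding R_def by (simp add: of_nat_diff)
  have up: "Lam (nat \<lfloor>real m - (real r * E) * real t ^ (r - 1)\<rfloor>) r
              \<le> (1 - R / real t - (2 * R + 1) / (real t)\<^sup>2) / fact r"
  proof (rule Lam_le)
    fix G assume G: "rgraph r G" "card G = nat \<lfloor>real m - (real r * E) * real t ^ (r - 1)\<rfloor>"
    have "fact r * real (card G) \<le> (real t - E) ^ r"
      unfolding G(2) by (rule fact_mult_reduced_card_le) (use r \<open>r \<le> t - 1\<close> \<open>0 \<le> E\<close> \<open>E \<le> real t\<close> m(2) in auto)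
    then show "lagrangian G \<le> (1 - R / real t - (2 * R + 1) / (real t)\<^sup>2) / fact r"
      unfolding R_def by (intro lagrangian_le_of_card[OF r t' G(1)]) (simp add: E_def)
  qed (use r in simp)
  have "1 / (real t)\<^sup>2 \<le> (1 - R / (real t - 1)) - (1 - R / real t - (2 * R + 1) / (real t)\<^sup>2)"
    using large(1,6) r by (intro inverse_square_le_gap) simp_all
  then have "(1 / (real t)\<^sup>2) / fact r
               \<le> ((1 - R / (real t - 1)) - (1 - R / real t - (2 * R + 1) / (real t)\<^sup>2)) / fact r"
    by (rule divide_right_mono) simp
  moreover have "(1 / fact r) / (real t)\<^sup>2 = (1 / (real t)\<^sup>2) / fact r" by simp
  ultimately show ?thesis using low up unfolding diff_divide_distrib by linarith
qed

theorem lemma4p5: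
  fixes r :: nat
  assumes "r \<ge> 3"
  shows "\<exists>\<alpha>::real>0. \<exists>c::real>0. \<exists>t0::nat. \<forall>t::nat. \<forall>m::nat.
           t \<ge> t0 \<longrightarrow> (t - 1) choose r \<le> m \<longrightarrow> m \<le> t choose r \<longrightarrow>
           Lam m r - Lam (nat \<lfloor>real m - \<alpha> * real t ^ (r - 1)\<rfloor>) r \<ge> c / (real t)^2"
proof -
  define E where "E = real r * (real r - 1) / 2 + 3 + real r ^ 5"
  have "0 \<le> real r * (real r - 1) / 2" "0 \<le> real r ^ 5" using assms by simp_all
  then have "E > 0" unfolding E_def by linarith
  show ?thesis
  proof (rule exI[of _ "real r * E"], intro conjI exI[of _ "1 / fact r"] exI[of _ "3 * r ^ 5"] allI impI)
    fix t m :: nat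
    assume "3 * r ^ 5 \<le> t" "(t - 1) choose r \<le> m" "m \<le> t choose r"
    then show "1 / fact r / (real t)\<^sup>2 \<le> Lam m r - Lam (nat \<lfloor>real m - real r * E * real t ^ (r - 1)\<rfloor>) r"
      unfolding E_def by (rule Lam_gap_ge[OF assms])
  qed (use \<open>E > 0\<close> assms in simp_all)
qed

end
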